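(* Let $(A,\circ)$ be a permutative algebra and let $D_1,D_2:A\to A$ be derivations of $(A,\circ)$ with $D_1D_2=D_2D_1$. Define $[x,y]=D_1(x)\circ D_2(y)-D_2(x)\circ D_1(y)$ for $x,y\in A$. Then $(A,[\cdot,\cdot])$ is a Leibniz algebra, and $(A,\circ,[\cdot,\cdot])$ is a dual pre-Poisson algebra.
   Context: Field $\mathbb{F}$ of characteristic $0$. A permutative algebra: $x\circ(y\circ z)=(x\circ y)\circ z=(y\circ x)\circ z$. A derivation is a linear $D$ with $D(x\circ y)=D(x)\circ y+x\circ D(y)$. A Leibniz algebra: $[x,[y,z]]=[[x,y],z]+[y,[x,z]]$. A dual pre-Poisson algebra $(A,\circ,[\cdot,\cdot])$: $(A,\circ)$ permutative, $(A,[\cdot,\cdot])$ Leibniz, and $[x,y\circ z]=[x,y]\circ z+y\circ[x,z]$, $[x\circ y,z]=x\circ[y,z]+y\circ[x,z]$, $[x,y]\circ z=-[y,x]\circ z$. *)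

theory Defs
  imports Complex_Main
begin

definition bilinear_op :: "('f::field \<Rightarrow> 'v::ab_group_add \<Rightarrow> 'v) \<Rightarrow> ('v \<Rightarrow> 'v \<Rightarrow> 'v) \<Rightarrow> bool" where
  "bilinear_op scale m \<longleftrightarrow>
     (\<forall>x. Vector_Spaces.linear scale scale (m x)) \<and>
     (\<forall>y. Vector_Spaces.linear scale scale (\<lambda>x. m x y))"

definition permutative_algebra :: "('f::field \<Rightarrow> 'v::ab_group_add \<Rightarrow> 'v) \<Rightarrow> ('v \<Rightarrow> 'v \<Rightarrow> 'v) \<Rightarrow> bool" where
  "permutative_algebra scale m \<longleftrightarrow>
     vector_space scale \<and> bilinear_op scale m \<and>
     (\<forall>x y z. m x (m y z) = m (m x y) z) \<and>
     (\<forall>x y z. m (m x y) z = m (m y x) z)"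

definition derivation :: "('f::field \<Rightarrow> 'v::ab_group_add \<Rightarrow> 'v) \<Rightarrow> ('v \<Rightarrow> 'v \<Rightarrow> 'v) \<Rightarrow> ('v \<Rightarrow> 'v) \<Rightarrow> bool" where
  "derivation scale m D \<longleftrightarrow>
     Vector_Spaces.linear scale scale D \<and>
     (\<forall>x y. D (m x y) = m (D x) y + m x (D y))"

definition leibniz_algebra :: "('f::field \<Rightarrow> 'v::ab_group_add \<Rightarrow> 'v) \<Rightarrow> ('v \<Rightarrow> 'v \<Rightarrow> 'v) \<Rightarrow> bool" where
  "leibniz_algebra scale b \<longleftrightarrow>
     vector_space scale \<and> bilinear_op scale b \<and>
     (\<forall>x y z. b x (b y z) = b (b x y) z + b y (b x z))"

definition dual_pre_poisson_algebra ::
  "('f::field \<Rightarrow> 'v::ab_group_add \<Rightarrow> 'v) \<Rightarrow> ('v \<Rightarrow> 'v \<Rightarrow> 'v) \<Rightarrow> ('v \<Rightarrow> 'v \<Rightarrow> 'v) \<Rightarrow> bool" where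
  "dual_pre_poisson_algebra scale m b \<longleftrightarrow>
     permutative_algebra scale m \<and> leibniz_algebra scale b \<and>
     (\<forall>x y z. b x (m y z) = m (b x y) z + m y (b x z)) \<and>
     (\<forall>x y z. b (m x y) z = m x (b y z) + m y (b x z)) \<and>
     (\<forall>x y z. m (b x y) z = - m (b y x) z)"

end

theory Submission
  imports Defs
begin

text \<open>All the identities are checked by expanding both sides with bilinearity and the
  product rule for \<open>D1\<close>, \<open>D2\<close>, and bringing every product into right-normed form
  \<open>m u (m v w)\<close>. By permutativity the left factors of such a product commute,
  \<open>m u (m v w) = m v (m u w)\<close>, so equal terms can be recognised and cancelled.
  Only the Leibniz identity involves the second derivatives \<open>D1 (D2 x)\<close> and \<open>D2 (D1 x)\<close>,
  and it is there that the derivations must commute.\<close>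

locale permutative =
  fixes scale :: "'f::field \<Rightarrow> 'v::ab_group_add \<Rightarrow> 'v" and m :: "'v \<Rightarrow> 'v \<Rightarrow> 'v"
  assumes permutative_algebra: "permutative_algebra scale m"
begin

lemma vector_space: "vector_space scale"
  using permutative_algebra by (simp add: permutative_algebra_def)

sublocale vector_space_pair scale scale
  by (simp add: vector_space vector_space_pair_def)

lemma linear_m_left: "Vector_Spaces.linear scale scale (m x)"
  and linear_m_right: "Vector_Spaces.linear scale scale (\<lambda>x. m x y)"
  using permutative_algebra by (simp_all add: permutative_algebra_def bilinear_op_def)

lemma m_assoc: "m (m x y) z = m x (m y z)"
  using permutative_algebra by (simp add: permutative_algebra_def)

lemma m_left_commute: "m x (m y z) = m y (m x z)"
  using permutative_algebra unfolding permutative_algebra_def by metis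

lemmas m_linear_simps =
  linear_add[OF linear_m_left] linear_diff[OF linear_m_left]
  linear_add[OF linear_m_right] linear_diff[OF linear_m_right]

end

locale permutative_two_derivations = permutative scale m
  for scale :: "'f::field \<Rightarrow> 'v::ab_group_add \<Rightarrow> 'v" and m +
  fixes D1 D2 :: "'v \<Rightarrow> 'v"
  assumes derivation_D1: "derivation scale m D1"
    and derivation_D2: "derivation scale m D2"
begin

lemma linear_D1: "Vector_Spaces.linear scale scale D1"
  and linear_D2: "Vector_Spaces.linear scale scale D2"
  using derivation_D1 derivation_D2 by (simp_all add: derivation_def)

lemma D1_m: "D1 (m x y) = m (D1 x) y + m x (D1 y)"
  and D2_m: "D2 (m x y) = m (D2 x) y + m x (D2 y)"
  using derivation_D1 derivation_D2 by (simp_all add: derivation_def)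

lemmas D_linear_simps =
  linear_add[OF linear_D1] linear_diff[OF linear_D1]
  linear_add[OF linear_D2] linear_diff[OF linear_D2]

definition bracket :: "'v \<Rightarrow> 'v \<Rightarrow> 'v" where
  "bracket x y = m (D1 x) (D2 y) - m (D2 x) (D1 y)"

lemma bilinear_op_bracket: "bilinear_op scale bracket"
proof -
  have "Vector_Spaces.linear scale scale (bracket x)" for x
    using linear_compose_sub[OF Vector_Spaces.linear_compose[OF linear_D2 linear_m_left]
                                Vector_Spaces.linear_compose[OF linear_D1 linear_m_left]]
    by (simp add: bracket_def[abs_def] o_def)
  moreover have "Vector_Spaces.linear scale scale (\<lambda>x. bracket x y)" for y
    using linear_compose_sub[OF Vector_Spaces.linear_compose[OF linear_D1 linear_m_right]
                                Vector_Spaces.linear_compose[OF linear_D2 linear_m_right]]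
    by (simp add: bracket_def[abs_def] o_def)
  ultimately show ?thesis
    by (simp add: bilinear_op_def)
qed

lemmas bracket_expand_simps =
  bracket_def m_linear_simps D_linear_simps D1_m D2_m m_assoc m_left_commute

lemma bracket_m_right: "bracket x (m y z) = m (bracket x y) z + m y (bracket x z)"
  by (simp add: bracket_expand_simps algebra_simps)

lemma bracket_m_left: "bracket (m x y) z = m x (bracket y z) + m y (bracket x z)"
  by (simp add: bracket_expand_simps algebra_simps)

lemma m_bracket_skew: "m (bracket x y) z = - m (bracket y x) z"
  by (simp add: bracket_expand_simps algebra_simps)

lemma bracket_leibniz:
  assumes "D1 \<circ> D2 = D2 \<circ> D1"
  shows "bracket x (bracket y z) = bracket (bracket x y) z + bracket y (bracket x z)"
proof -
  have "D2 (D1 u) = D1 (D2 u)" for u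
    using assms by (metis comp_apply)
  then show ?thesis
    by (simp add: bracket_expand_simps algebra_simps)
qed

lemma leibniz_algebra_bracket:
  assumes "D1 \<circ> D2 = D2 \<circ> D1"
  shows "leibniz_algebra scale bracket"
  unfolding leibniz_algebra_def
  using vector_space bilinear_op_bracket bracket_leibniz[OF assms]
  by blast

lemma dual_pre_poisson_algebra_bracket:
  assumes "D1 \<circ> D2 = D2 \<circ> D1"
  shows "dual_pre_poisson_algebra scale m bracket"
  unfolding dual_pre_poisson_algebra_def
  using permutative_algebra leibniz_algebra_bracket[OF assms]
    bracket_m_right bracket_m_left m_bracket_skew
  by blast

end

theorem proposition2p16:
  fixes scale :: "'f::field_char_0 \<Rightarrow> 'v::ab_group_add \<Rightarrow> 'v"
    and m :: "'v \<Rightarrow> 'v \<Rightarrow> 'v"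
    and D1 D2 :: "'v \<Rightarrow> 'v"
  assumes "permutative_algebra scale m"
    and "derivation scale m D1"
    and "derivation scale m D2"
    and "D1 \<circ> D2 = D2 \<circ> D1"
  shows "leibniz_algebra scale (\<lambda>x y. m (D1 x) (D2 y) - m (D2 x) (D1 y))
       \<and> dual_pre_poisson_algebra scale m (\<lambda>x y. m (D1 x) (D2 y) - m (D2 x) (D1 y))"
proof -
  interpret permutative_two_derivations scale m D1 D2
    by unfold_locales (fact assms)+
  have "(\<lambda>x y. m (D1 x) (D2 y) - m (D2 x) (D1 y)) = bracket"
    by (simp add: fun_eq_iff bracket_def)
  then show ?thesis
    using leibniz_algebra_bracket[OF assms(4)] dual_pre_poisson_algebra_bracket[OF assms(4)]
    by simp
qed

end
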